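(* Let $A^{I_1,\dots,I_s}_{\sigma_1,\dots,\sigma_s,i_{s+1},\dots,i_{n-1}}$ ($s=0,\dots,n-1$, $|I_l|=r-1$) be smooth functions on $V^{r-1}$ with the symmetry property described in the context, let $\mathcal{L}$ be defined by $$\mathcal{L}^{I_1,\dots,I_s}_{\sigma_1,\dots,\sigma_s,i_{s+1},\dots,i_n}=\sum_{k=1}^{s}(-1)^{k-1}\partial^{I_k}_{\sigma_k}A^{I_1,\dots,\widehat{I_k},\dots,I_s}_{\sigma_1,\dots,\widehat{\sigma_k},\dots,\sigma_s,i_{s+1},\dots,i_n}+\sum_{k=s+1}^{n}(-1)^{k-1}d_{i_k}A^{I_1,\dots,I_s}_{\sigma_1,\dots,\sigma_s,i_{s+1},\dots,\widehat{i_k},\dots,i_n}$$ ($d_j=d^{r-1}_j$), and let $L=\sum_{s=0}^{n}\frac{1}{s!(n-s)!}\sum_{|I_1|,\dots,|I_s|=r-1}\mathcal{L}^{I_1,\dots,I_s}_{\sigma_1,\dots,\sigma_s,i_{s+1},\dots,i_n}\mathcal{J}^{\sigma_1,\dots,\sigma_s,i_{s+1},\dots,i_n}_{I_1,\dots,I_s}$. Then there exist smooth functions $V^j$, $j=1,\dots,n$, on $V^r$ such that $$L=\sum_{j=1}^n d_jV^j .$$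
   Context: $\pi:Y\to X$ is a fibre bundle, $\dim X=n$, fibre dimension $m$, with adapted chart $(V,\psi)$, $\psi=(x^i,y^\sigma)$, and associated charts $(V^k,\psi^k)$ on jet prolongations $J^kY$ with coordinates $x^i,y^\sigma_J$, $|J|\le k$ ($y^\sigma_J$ symmetric in $J$). $\partial^J_\sigma=\frac{r_1!\cdots r_n!}{|J|!}\partial/\partial y^\sigma_J$ ($r_l$ the multiplicity of $l$ in $J$); sums over multi-indices run over all ordered tuples and repeated indices are summed. Formal derivatives: $d_i^{p}=\partial/\partial x^i+\sum_{k=0}^{p-1}y^\sigma_{ij_1\dots j_k}\partial^{j_1\dots j_k}_\sigma$. Hyper-Jacobians: $\mathcal{J}^{\sigma_1,\dots,\sigma_s,i_{s+1},\dots,i_n}_{I_1,\dots,I_s}=\sum_{i_1,\dots,i_s}\varepsilon^{i_1\dots i_n}\prod_{l=1}^{s}y^{\sigma_l}_{I_li_l}$. Symmetry property: $A^{I_{P(1)},\dots,I_{P(s)}}_{\sigma_{P(1)},\dots,\sigma_{P(s)},i_{Q(s+1)},\dots,i_{Q(q)}}=(-1)^{|P|+|Q|}A^{I_1,\dots,I_s}_{\sigma_1,\dots,\sigma_s,i_{s+1},\dots,i_q}$ for all permutations $P$ of $\{1,\dots,s\}$ and $Q$ of $\{s+1,\dots,q\}$. *)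

theory Defs
  imports "HOL-Analysis.Analysis" "HOL-Library.Multiset" "HOL-Combinatorics.Permutations"
begin

(* Coordinates on the jet prolongations J^k Y over an adapted chart.
   Base indices i (0..n-1), fibre indices sigma (0..m-1).
   A coordinate label is either x^i  (XC i)  or  y^sigma_J  (YC sigma J), where the
   multi-index J is stored as a multiset (y^sigma_J is symmetric in J).
   A point of (the coordinate image of) the jet space is an assignment of reals to
   labels; a function on V^k is a function of such assignments depending only on the
   coordinates of order <= k. *)

datatype jlabel = XC nat | YC nat "nat multiset"

type_synonym jpoint = "jlabel \<Rightarrow> real"

definition jcoords :: "nat \<Rightarrow> nat \<Rightarrow> nat \<Rightarrow> jlabel set" where
  "jcoords n m k = {XC i | i. i < n} \<union>
     {YC \<sigma> J | \<sigma> J. \<sigma> < m \<and> set_mset J \<subseteq> {..<n} \<and> size J \<le> k}"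

(* the coordinate domain V (= preimage of an open subset of psi(V) in R^{n+m}):
   open, and determined by the coordinates x^i, y^sigma only *)
definition chart_domain :: "nat \<Rightarrow> nat \<Rightarrow> jpoint set \<Rightarrow> bool" where
  "chart_domain n m V \<longleftrightarrow> open V \<and>
     (\<forall>p q. (\<forall>c \<in> jcoords n m 0. p c = q c) \<longrightarrow> (p \<in> V \<longleftrightarrow> q \<in> V))"

definition pd :: "jlabel \<Rightarrow> (jpoint \<Rightarrow> real) \<Rightarrow> jpoint \<Rightarrow> real" where
  "pd c F p = deriv (\<lambda>t. F (p(c := p c + t))) 0"

fun pds :: "jlabel list \<Rightarrow> (jpoint \<Rightarrow> real) \<Rightarrow> jpoint \<Rightarrow> real" where
  "pds [] F = F"
| "pds (c # cs) F = pd c (pds cs F)"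

definition smooth_on :: "jpoint set \<Rightarrow> (jpoint \<Rightarrow> real) \<Rightarrow> bool" where
  "smooth_on U F \<longleftrightarrow> (\<forall>cs. continuous_on U (pds cs F) \<and>
     (\<forall>c. \<forall>p \<in> U. (\<lambda>t. pds cs F (p(c := p c + t))) differentiable (at 0)))"

definition jet_smooth :: "nat \<Rightarrow> nat \<Rightarrow> nat \<Rightarrow> jpoint set \<Rightarrow> (jpoint \<Rightarrow> real) \<Rightarrow> bool" where
  "jet_smooth n m k V F \<longleftrightarrow>
     (\<forall>p q. (\<forall>c \<in> jcoords n m k. p c = q c) \<longrightarrow> F p = F q) \<and> smooth_on V F"

definition tuples :: "nat \<Rightarrow> 'a set \<Rightarrow> 'a list set" where
  "tuples k S = {xs. length xs = k \<and> set xs \<subseteq> S}"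

definition wpd :: "nat \<Rightarrow> nat \<Rightarrow> nat list \<Rightarrow> (jpoint \<Rightarrow> real) \<Rightarrow> jpoint \<Rightarrow> real" where
  "wpd n \<sigma> J F p = (\<Prod>l<n. fact (count (mset J) l)) / fact (length J) * pd (YC \<sigma> (mset J)) F p"

definition fder :: "nat \<Rightarrow> nat \<Rightarrow> nat \<Rightarrow> nat \<Rightarrow> (jpoint \<Rightarrow> real) \<Rightarrow> jpoint \<Rightarrow> real" where
  "fder n m q i F p = pd (XC i) F p +
     (\<Sum>k<q. \<Sum>\<sigma><m. \<Sum>js \<in> tuples k {..<n}. p (YC \<sigma> (mset (i # js))) * wpd n \<sigma> js F p)"

definition levi :: "nat \<Rightarrow> nat list \<Rightarrow> real" where
  "levi n is = (if length is = n \<and> set is = {..<n}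
      then real_of_int (sign (\<lambda>l. if l < n then is ! l else l)) else 0)"

definition hyperjac :: "nat \<Rightarrow> nat list list \<Rightarrow> nat list \<Rightarrow> nat list \<Rightarrow> jpoint \<Rightarrow> real" where
  "hyperjac n Is \<sigma>s is p = (\<Sum>js \<in> tuples (length Is) {..<n}.
      levi n (js @ is) * (\<Prod>l<length Is. p (YC (\<sigma>s ! l) (mset ((Is ! l) @ [js ! l])))))"

definition del_nth :: "nat \<Rightarrow> 'a list \<Rightarrow> 'a list" where
  "del_nth k xs = take k xs @ drop (Suc k) xs"

(* A Is \<sigma>s is  =  A^{I_1..I_s}_{\<sigma>_1..\<sigma>_s, i_{s+1}..i_{n-1}}  (s = length Is) *)
type_synonym afam = "nat list list \<Rightarrow> nat list \<Rightarrow> nat list \<Rightarrow> jpoint \<Rightarrow> real"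

(* \<L>^{I_1..I_s}_{\<sigma>_1..\<sigma>_s, i_{s+1}..i_n}, with d_j = d_j^{r-1};
   0-based k: sign (-1)^k in the first sum, (-1)^(s+k) in the second *)
definition calL :: "nat \<Rightarrow> nat \<Rightarrow> nat \<Rightarrow> afam \<Rightarrow> nat list list \<Rightarrow> nat list \<Rightarrow> nat list \<Rightarrow> jpoint \<Rightarrow> real" where
  "calL n m r A Is \<sigma>s is p =
     (\<Sum>k<length Is. (-1) ^ k * wpd n (\<sigma>s ! k) (Is ! k) (A (del_nth k Is) (del_nth k \<sigma>s) is) p)
   + (\<Sum>k<length is. (-1) ^ (length Is + k) * fder n m (r - 1) (is ! k) (A Is \<sigma>s (del_nth k is)) p)"

definition Lagr :: "nat \<Rightarrow> nat \<Rightarrow> nat \<Rightarrow> afam \<Rightarrow> jpoint \<Rightarrow> real" where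
  "Lagr n m r A p = (\<Sum>s\<le>n. 1 / (fact s * fact (n - s)) *
     (\<Sum>Is \<in> tuples s (tuples (r - 1) {..<n}). \<Sum>\<sigma>s \<in> tuples s {..<m}. \<Sum>is \<in> tuples (n - s) {..<n}.
        calL n m r A Is \<sigma>s is p * hyperjac n Is \<sigma>s is p))"

end

(* The potential is
     V^j = sum_s (-1)^s / (s! (n-1-s)!) * sum A^{I_1..I_s}_{sigma_1..sigma_s,i_(s+1)..i_(n-1)}
                                           * J^{sigma_1..sigma_s,j,i_(s+1)..i_(n-1)}_{I_1..I_s}.
   Hyper-Jacobians are divergence free, sum_j d_j J^{..,j,..} = 0: the formal derivative
   d_j y^sigma_(I i) = y^sigma_(I i j) is symmetric in (i, j), while the Levi-Civita symbol is
   antisymmetric.  Hence sum_j d_j V^j only differentiates the coefficients A.  Splitting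
   d^r_j = d^(r-1)_j + sum y^sigma_(I j) \<partial>^I_sigma, the first part reproduces the d_(i_k)-terms of L
   and the second one, after expanding J along its first pair (sigma, I), the \<partial>-terms of L one
   level higher.  Both identifications only use the antisymmetry of J in its pairs (sigma_l, I_l)
   and in its base indices; the index that is split off can sit in s + 1 resp. n - s positions,
   which turns the weight 1 / (s! (n-s)!) of L into that of V^j. *)

theory Submission
  imports Defs "HOL-Combinatorics.Multiset_Permutations"
begin

section \<open>Partial derivatives along coordinate lines\<close>

definition partially_differentiable_at :: "(jpoint \<Rightarrow> real) \<Rightarrow> jpoint \<Rightarrow> bool" where
  "partially_differentiable_at F p \<longleftrightarrow> (\<forall>c. (\<lambda>t. F (p(c := p c + t))) differentiable (at 0))"

lemma eventually_coordinate_line_in_open: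
  fixes p :: jpoint
  assumes "open V" "p \<in> V"
  shows "eventually (\<lambda>t. p(c := p c + t) \<in> V) (nhds 0)"
proof -
  have "continuous_on UNIV (\<lambda>t. p(c := p c + t))"
  proof (rule continuous_on_coordinatewise_then_product)
    show "continuous_on UNIV (\<lambda>t. (p(c := p c + t)) d)" for d
      by (cases "d = c") (auto intro!: continuous_intros)
  qed
  hence "isCont (\<lambda>t. p(c := p c + t)) 0"
    using continuous_on_eq_continuous_at by blast
  hence "((\<lambda>t. p(c := p c + t)) \<longlongrightarrow> p) (nhds 0)"
    using tendsto_at_iff_tendsto_nhds[of "\<lambda>t. p(c := p c + t)" 0] by (simp add: isCont_def)
  thus ?thesis using assms by (auto dest: topological_tendstoD)
qed

lemma pd_cong_open:
  assumes "open V" "p \<in> V" "\<And>q. q \<in> V \<Longrightarrow> F q = G q"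
  shows "pd c F p = pd c G p"
  unfolding pd_def
  by (rule deriv_cong_ev[OF _ refl])
     (use eventually_coordinate_line_in_open[OF assms(1,2), of c] assms(3) in \<open>auto elim: eventually_mono\<close>)

lemma partially_differentiable_at_cong_open:
  assumes "open V" "p \<in> V" "\<And>q. q \<in> V \<Longrightarrow> F q = G q" "partially_differentiable_at F p"
  shows "partially_differentiable_at G p"
  unfolding partially_differentiable_at_def
proof
  fix c
  have "eventually (\<lambda>t. F (p(c := p c + t)) = G (p(c := p c + t))) (nhds 0)"
    using eventually_coordinate_line_in_open[OF assms(1,2), of c] assms(3) by (auto elim: eventually_mono)
  moreover obtain D where "((\<lambda>t. F (p(c := p c + t))) has_real_derivative D) (at 0)"
    using assms(4) by (auto simp: partially_differentiable_at_def real_differentiable_def)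
  ultimately have "((\<lambda>t. G (p(c := p c + t))) has_real_derivative D) (at 0)"
    by (simp add: DERIV_cong_ev[OF refl _ refl])
  thus "(\<lambda>t. G (p(c := p c + t))) differentiable (at 0)"
    using real_differentiable_def by blast
qed

lemma has_real_derivative_pd:
  "partially_differentiable_at F p \<Longrightarrow> ((\<lambda>t. F (p(c := p c + t))) has_real_derivative pd c F p) (at 0)"
  unfolding partially_differentiable_at_def pd_def using DERIV_deriv_iff_real_differentiable by blast

lemma partially_differentiable_atI:
  "(\<And>c. \<exists>D. ((\<lambda>t. F (p(c := p c + t))) has_real_derivative D) (at 0)) \<Longrightarrow> partially_differentiable_at F p"
  unfolding partially_differentiable_at_def using real_differentiable_def by blast

lemma partially_differentiable_at_add:
  "partially_differentiable_at F p \<Longrightarrow> partially_differentiable_at G p \<Longrightarrow>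
    partially_differentiable_at (\<lambda>q. F q + G q) p"
  by (rule partially_differentiable_atI) (use has_real_derivative_pd DERIV_add in blast)

lemma partially_differentiable_at_mult:
  "partially_differentiable_at F p \<Longrightarrow> partially_differentiable_at G p \<Longrightarrow>
    partially_differentiable_at (\<lambda>q. F q * G q) p"
  by (rule partially_differentiable_atI) (use has_real_derivative_pd DERIV_mult in blast)

lemma partially_differentiable_at_const: "partially_differentiable_at (\<lambda>q. a) p"
  by (rule partially_differentiable_atI) (use DERIV_const in blast)

lemma has_real_derivative_coord_line:
  "((\<lambda>t. (p(c := p c + t)) d) has_real_derivative (if c = d then 1 else 0)) (at 0)"
  by (cases "c = d") (auto intro!: derivative_eq_intros)

lemma partially_differentiable_at_coord: "partially_differentiable_at (\<lambda>q. q d) p"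
  by (rule partially_differentiable_atI, rule exI, rule has_real_derivative_coord_line)

lemma partially_differentiable_at_sum:
  "finite S \<Longrightarrow> (\<And>x. x \<in> S \<Longrightarrow> partially_differentiable_at (F x) p) \<Longrightarrow>
    partially_differentiable_at (\<lambda>q. \<Sum>x\<in>S. F x q) p"
  by (induction S rule: finite_induct)
     (auto intro!: partially_differentiable_at_add partially_differentiable_at_const)

lemma partially_differentiable_at_prod:
  "finite S \<Longrightarrow> (\<And>x. x \<in> S \<Longrightarrow> partially_differentiable_at (F x) p) \<Longrightarrow>
    partially_differentiable_at (\<lambda>q. \<Prod>x\<in>S. F x q) p"
  by (induction S rule: finite_induct)
     (auto intro!: partially_differentiable_at_mult partially_differentiable_at_const)

lemma pd_add:
  "partially_differentiable_at F p \<Longrightarrow> partially_differentiable_at G p \<Longrightarrow>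
    pd c (\<lambda>q. F q + G q) p = pd c F p + pd c G p"
  unfolding pd_def[of c "\<lambda>q. F q + G q"] by (intro DERIV_imp_deriv DERIV_add has_real_derivative_pd)

lemma pd_mult:
  assumes "partially_differentiable_at F p" "partially_differentiable_at G p"
  shows "pd c (\<lambda>q. F q * G q) p = pd c F p * G p + F p * pd c G p"
  unfolding pd_def[of c "\<lambda>q. F q * G q"]
  by (rule DERIV_imp_deriv)
     (use DERIV_mult[OF has_real_derivative_pd[OF assms(1)] has_real_derivative_pd[OF assms(2)], of c c]
       in \<open>simp add: mult.commute\<close>)

lemma pd_const: "pd c (\<lambda>q. a) p = 0"
  by (simp add: pd_def)

lemma pd_coord: "pd c (\<lambda>q. q d) p = (if c = d then 1 else 0)"
  unfolding pd_def by (rule DERIV_imp_deriv[OF has_real_derivative_coord_line])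

lemma pd_sum:
  "finite S \<Longrightarrow> (\<And>x. x \<in> S \<Longrightarrow> partially_differentiable_at (F x) p) \<Longrightarrow>
    pd c (\<lambda>q. \<Sum>x\<in>S. F x q) p = (\<Sum>x\<in>S. pd c (F x) p)"
  by (induction S rule: finite_induct) (auto simp: pd_const pd_add partially_differentiable_at_sum)

lemma pd_prod:
  "finite S \<Longrightarrow> (\<And>x. x \<in> S \<Longrightarrow> partially_differentiable_at (F x) p) \<Longrightarrow>
    pd c (\<lambda>q. \<Prod>x\<in>S. F x q) p = (\<Sum>x\<in>S. pd c (F x) p * (\<Prod>y\<in>S - {x}. F y p))"
proof (induction S rule: finite_induct)
  case empty
  then show ?case by (simp add: pd_const)
next
  case (insert x S)
  have "pd c (\<lambda>q. \<Prod>y\<in>insert x S. F y q) p = pd c (\<lambda>q. F x q * (\<Prod>y\<in>S. F y q)) p"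
    using insert by simp
  also have "\<dots> = pd c (F x) p * (\<Prod>y\<in>S. F y p) + F x p * (\<Sum>z\<in>S. pd c (F z) p * (\<Prod>y\<in>S - {z}. F y p))"
    using insert by (simp add: pd_mult partially_differentiable_at_prod)
  also have "\<dots> = (\<Sum>z\<in>insert x S. pd c (F z) p * (\<Prod>y\<in>insert x S - {z}. F y p))"
  proof -
    have "insert x S - {z} = insert x (S - {z})" if "z \<in> S" for z
      using that insert by auto
    moreover have "insert x S - {x} = S" using insert by auto
    ultimately show ?thesis
      using insert by (simp add: sum_distrib_left mult_ac cong: sum.cong)
  qed
  finally show ?case .
qed

section \<open>Smoothness up to a finite order\<close>

definition smooth_upto_on :: "nat \<Rightarrow> jpoint set \<Rightarrow> (jpoint \<Rightarrow> real) \<Rightarrow> bool" where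
  "smooth_upto_on k V F \<longleftrightarrow> (\<forall>cs. length cs \<le> k \<longrightarrow>
     continuous_on V (pds cs F) \<and> (\<forall>p\<in>V. partially_differentiable_at (pds cs F) p))"

lemma smooth_on_iff_smooth_upto_on: "smooth_on V F \<longleftrightarrow> (\<forall>k. smooth_upto_on k V F)"
  unfolding smooth_on_def smooth_upto_on_def partially_differentiable_at_def by (meson order_refl)

lemma smooth_upto_onD:
  assumes "smooth_upto_on k V F" "length cs \<le> k"
  shows "continuous_on V (pds cs F)" "p \<in> V \<Longrightarrow> partially_differentiable_at (pds cs F) p"
  using assms unfolding smooth_upto_on_def by blast+

lemma smooth_upto_on_imp_partially_differentiable_at:
  "smooth_upto_on k V F \<Longrightarrow> p \<in> V \<Longrightarrow> partially_differentiable_at F p"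
  using smooth_upto_onD(2)[of k V F "[]"] by simp

lemma smooth_upto_on_mono: "k' \<le> k \<Longrightarrow> smooth_upto_on k V F \<Longrightarrow> smooth_upto_on k' V F"
  unfolding smooth_upto_on_def by auto

lemma pds_append: "pds (cs @ ds) F = pds cs (pds ds F)"
  by (induction cs) auto

lemma smooth_upto_on_pd: "smooth_upto_on (Suc k) V F \<Longrightarrow> smooth_upto_on k V (pd c F)"
  unfolding smooth_upto_on_def
proof (intro allI impI)
  fix cs :: "jlabel list"
  assume "\<forall>cs. length cs \<le> Suc k \<longrightarrow>
      continuous_on V (pds cs F) \<and> (\<forall>p\<in>V. partially_differentiable_at (pds cs F) p)"
    and "length cs \<le> k"
  thus "continuous_on V (pds cs (pd c F)) \<and> (\<forall>p\<in>V. partially_differentiable_at (pds cs (pd c F)) p)"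
    using pds_append[of cs "[c]" F] by (metis pds.simps length_append_singleton Suc_le_mono)
qed

lemma pds_cong_open:
  "open V \<Longrightarrow> (\<And>q. q \<in> V \<Longrightarrow> F q = G q) \<Longrightarrow> q \<in> V \<Longrightarrow> pds cs F q = pds cs G q"
  by (induction cs arbitrary: q) (auto intro: pd_cong_open[of V])

lemma smooth_upto_on_cong_open:
  assumes "open V" "\<And>q. q \<in> V \<Longrightarrow> F q = G q" "smooth_upto_on k V F"
  shows "smooth_upto_on k V G"
  unfolding smooth_upto_on_def
proof (intro allI impI conjI ballI)
  fix cs :: "jlabel list" assume "length cs \<le> k"
  note F = smooth_upto_onD[OF assms(3) this]
  have eq: "\<And>q. q \<in> V \<Longrightarrow> pds cs F q = pds cs G q"
    using pds_cong_open[OF assms(1,2)] .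
  show "continuous_on V (pds cs G)"
    using F(1) continuous_on_cong[of V V "pds cs F" "pds cs G"] eq by simp
  show "partially_differentiable_at (pds cs G) p" if "p \<in> V" for p
    using partially_differentiable_at_cong_open[OF assms(1) that eq F(2)[OF that]] .
qed

lemma pds_add:
  assumes V: "open V" and F: "smooth_upto_on k V F" and G: "smooth_upto_on k V G"
  shows "length cs \<le> k \<Longrightarrow> q \<in> V \<Longrightarrow> pds cs (\<lambda>x. F x + G x) q = pds cs F q + pds cs G q"
proof (induction cs arbitrary: q)
  case (Cons c cs)
  have cs: "length cs \<le> k" using Cons.prems by simp
  have "pds (c # cs) (\<lambda>x. F x + G x) q = pd c (\<lambda>x. pds cs F x + pds cs G x) q"
    unfolding pds.simps by (rule pd_cong_open[OF V Cons.prems(2) Cons.IH[OF cs]])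
  also have "\<dots> = pds (c # cs) F q + pds (c # cs) G q"
    using smooth_upto_onD(2)[OF F cs Cons.prems(2)] smooth_upto_onD(2)[OF G cs Cons.prems(2)]
    by (simp add: pd_add)
  finally show ?case .
qed simp

lemma smooth_upto_on_add:
  assumes V: "open V" and F: "smooth_upto_on k V F" and G: "smooth_upto_on k V G"
  shows "smooth_upto_on k V (\<lambda>x. F x + G x)"
  unfolding smooth_upto_on_def
proof (intro allI impI conjI ballI)
  fix cs :: "jlabel list" assume cs: "length cs \<le> k"
  note eq = pds_add[OF V F G cs]
  have "continuous_on V (\<lambda>x. pds cs F x + pds cs G x)"
    by (intro continuous_on_add smooth_upto_onD(1)[OF F cs] smooth_upto_onD(1)[OF G cs])
  thus "continuous_on V (pds cs (\<lambda>x. F x + G x))"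
    using continuous_on_cong[of V V "pds cs (\<lambda>x. F x + G x)"] eq by simp
  fix p assume p: "p \<in> V"
  have sum_pdiff: "partially_differentiable_at (\<lambda>x. pds cs F x + pds cs G x) p"
    by (intro partially_differentiable_at_add smooth_upto_onD(2)[OF F cs p] smooth_upto_onD(2)[OF G cs p])
  show "partially_differentiable_at (pds cs (\<lambda>x. F x + G x)) p"
    by (rule partially_differentiable_at_cong_open[OF V p _ sum_pdiff]) (simp add: eq)
qed

lemma pds_const: "pds cs (\<lambda>x. a) = (\<lambda>x. if cs = [] then a else 0)"
  by (induction cs) (auto simp: pd_const)

lemma smooth_upto_on_const: "smooth_upto_on k V (\<lambda>x. a)"
  unfolding smooth_upto_on_def pds_const
  by (auto intro: partially_differentiable_at_const)

lemma pds_coord: "pds cs (\<lambda>x. x d) = (\<lambda>x. x d) \<or> (\<exists>a. pds cs (\<lambda>x. x d) = (\<lambda>x. a))"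
proof (cases cs rule: rev_exhaust)
  case (snoc cs' c)
  have "pd c (\<lambda>x. x d) = (\<lambda>x. if c = d then 1 else 0)"
    by (simp add: fun_eq_iff pd_coord)
  thus ?thesis using snoc by (simp add: pds_append pds_const) blast
qed simp

lemma smooth_upto_on_coord: "smooth_upto_on k V (\<lambda>x. x d)"
  unfolding smooth_upto_on_def
proof (intro allI impI)
  fix cs :: "jlabel list"
  have "continuous_on V (\<lambda>x. x d)"
    by (rule continuous_on_subset[OF continuous_on_product_coordinates]) simp
  then consider "pds cs (\<lambda>x. x d) = (\<lambda>x. x d)" | a where "pds cs (\<lambda>x. x d) = (\<lambda>x. a)"
    using pds_coord by blast
  thus "continuous_on V (pds cs (\<lambda>x. x d)) \<and> (\<forall>p\<in>V. partially_differentiable_at (pds cs (\<lambda>x. x d)) p)"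
    using \<open>continuous_on V (\<lambda>x. x d)\<close>
    by cases (auto intro: partially_differentiable_at_coord partially_differentiable_at_const)
qed

lemma smooth_upto_on_0:
  "smooth_upto_on 0 V F \<longleftrightarrow> continuous_on V F \<and> (\<forall>p\<in>V. partially_differentiable_at F p)"
  by (simp add: smooth_upto_on_def)

lemma smooth_upto_on_mult:
  "open V \<Longrightarrow> smooth_upto_on k V F \<Longrightarrow> smooth_upto_on k V G \<Longrightarrow> smooth_upto_on k V (\<lambda>x. F x * G x)"
proof (induction k arbitrary: F G)
  case 0
  thus ?case by (simp add: smooth_upto_on_0 continuous_on_mult partially_differentiable_at_mult)
next
  case (Suc k)
  show ?case unfolding smooth_upto_on_def
  proof (intro allI impI)
    fix cs :: "jlabel list" assume cs: "length cs \<le> Suc k"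
    show "continuous_on V (pds cs (\<lambda>x. F x * G x)) \<and>
      (\<forall>p\<in>V. partially_differentiable_at (pds cs (\<lambda>x. F x * G x)) p)"
    proof (cases cs rule: rev_exhaust)
      case Nil
      have "smooth_upto_on 0 V (\<lambda>x. F x * G x)"
        using Suc.prems smooth_upto_on_mono[of 0 "Suc k" V]
        by (simp add: smooth_upto_on_0 continuous_on_mult partially_differentiable_at_mult)
      thus ?thesis using Nil by (simp add: smooth_upto_on_0)
    next
      case (snoc cs' c)
      have "smooth_upto_on k V (\<lambda>x. pd c F x * G x + F x * pd c G x)"
        using Suc smooth_upto_on_mono[of k "Suc k" V]
        by (intro smooth_upto_on_add Suc.IH smooth_upto_on_pd) auto
      moreover have "pd c F q * G q + F q * pd c G q = pd c (\<lambda>x. F x * G x) q" if "q \<in> V" for q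
        using Suc.prems that by (intro pd_mult[symmetric] smooth_upto_on_imp_partially_differentiable_at)
      ultimately have pd_smooth: "smooth_upto_on k V (pd c (\<lambda>x. F x * G x))"
        by (rule smooth_upto_on_cong_open[OF Suc.prems(1), rotated])
      have "length cs' \<le> k" using snoc cs by simp
      thus ?thesis using snoc smooth_upto_onD[OF pd_smooth] by (simp add: pds_append)
    qed
  qed
qed

lemma smooth_upto_on_sum:
  "finite S \<Longrightarrow> open V \<Longrightarrow> (\<And>x. x \<in> S \<Longrightarrow> smooth_upto_on k V (F x)) \<Longrightarrow>
    smooth_upto_on k V (\<lambda>q. \<Sum>x\<in>S. F x q)"
  by (induction S rule: finite_induct) (auto intro: smooth_upto_on_const smooth_upto_on_add)

lemma smooth_upto_on_prod:
  "finite S \<Longrightarrow> open V \<Longrightarrow> (\<And>x. x \<in> S \<Longrightarrow> smooth_upto_on k V (F x)) \<Longrightarrow>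
    smooth_upto_on k V (\<lambda>q. \<Prod>x\<in>S. F x q)"
  by (induction S rule: finite_induct) (auto intro: smooth_upto_on_const smooth_upto_on_mult)

section \<open>Tuples and the Levi-Civita symbol\<close>

lemma mem_tuples: "xs \<in> tuples k S \<longleftrightarrow> length xs = k \<and> set xs \<subseteq> S"
  by (simp add: tuples_def)

lemma finite_tuples [simp]: "finite S \<Longrightarrow> finite (tuples k S)"
  unfolding tuples_def using finite_lists_length_eq[of S k] by (simp add: conj_commute)

lemma tuples_0 [simp]: "tuples 0 S = {[]}"
  by (auto simp: tuples_def)

lemma nth_mem_tuples: "xs \<in> tuples k S \<Longrightarrow> l < k \<Longrightarrow> xs ! l \<in> S"
  by (auto simp: mem_tuples)

definition insert_nth :: "nat \<Rightarrow> 'a \<Rightarrow> 'a list \<Rightarrow> 'a list" where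
  "insert_nth k a xs = take k xs @ a # drop k xs"

lemma length_insert_nth [simp]: "length (insert_nth k a xs) = Suc (length xs)"
  by (simp add: insert_nth_def)

lemma insert_nth_0 [simp]: "insert_nth 0 a xs = a # xs"
  by (simp add: insert_nth_def)

lemma set_insert_nth [simp]: "set (insert_nth k a xs) = insert a (set xs)"
proof -
  have "set (take k xs) \<union> set (drop k xs) = set xs"
    by (metis append_take_drop_id set_append)
  thus ?thesis by (auto simp: insert_nth_def)
qed

lemma nth_insert_nth_same [simp]: "k \<le> length xs \<Longrightarrow> insert_nth k a xs ! k = a"
  by (simp add: insert_nth_def nth_append)

lemma nth_insert_nth_skip:
  "k \<le> length xs \<Longrightarrow> l < length xs \<Longrightarrow> insert_nth k a xs ! (if l < k then l else Suc l) = xs ! l"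
  by (auto simp: insert_nth_def nth_append min_def nth_Cons')

lemma del_nth_insert_nth [simp]: "k \<le> length xs \<Longrightarrow> del_nth k (insert_nth k a xs) = xs"
  by (simp add: insert_nth_def del_nth_def)

lemma insert_nth_del_nth: "k < length xs \<Longrightarrow> insert_nth k (xs ! k) (del_nth k xs) = xs"
  by (simp add: insert_nth_def del_nth_def min_def id_take_nth_drop[symmetric])

lemma map_insert_nth: "map f (insert_nth k a xs) = insert_nth k (f a) (map f xs)"
  by (simp add: insert_nth_def take_map drop_map)

lemma map_del_nth: "map f (del_nth k xs) = del_nth k (map f xs)"
  by (simp add: del_nth_def take_map drop_map)

lemma length_del_nth [simp]: "k < length xs \<Longrightarrow> length (del_nth k xs) = length xs - 1"
  by (simp add: del_nth_def)

lemma set_del_nth_subset: "set (del_nth k xs) \<subseteq> set xs"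
  by (auto simp: del_nth_def dest: in_set_takeD in_set_dropD)

lemma sum_tuples_Suc_insert_nth:
  assumes "k \<le> s"
  shows "(\<Sum>xs\<in>tuples (Suc s) S. f xs) = (\<Sum>a\<in>S. \<Sum>ys\<in>tuples s S. f (insert_nth k a ys))"
proof -
  have "bij_betw (\<lambda>(a, ys). insert_nth k a ys) (S \<times> tuples s S) (tuples (Suc s) S)"
  proof (rule bij_betw_byWitness[where f' = "\<lambda>xs. (xs ! k, del_nth k xs)"])
    show "(\<lambda>xs. (xs ! k, del_nth k xs)) ` tuples (Suc s) S \<subseteq> S \<times> tuples s S"
    proof (rule image_subsetI)
      fix xs assume "xs \<in> tuples (Suc s) S"
      thus "(xs ! k, del_nth k xs) \<in> S \<times> tuples s S"
        using assms nth_mem[of k xs] set_del_nth_subset[of k xs] by (auto simp: mem_tuples)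
    qed
  qed (use assms in \<open>auto simp: mem_tuples insert_nth_del_nth\<close>)
  hence "(\<Sum>xs\<in>tuples (Suc s) S. f xs) = (\<Sum>(a, ys)\<in>S \<times> tuples s S. f (insert_nth k a ys))"
    by (simp add: sum.reindex_bij_betw[symmetric] case_prod_unfold)
  thus ?thesis by (simp add: sum.cartesian_product)
qed

lemma sum_tuples_alternating_del_nth:
  assumes f: "\<And>k a xs. k \<le> t \<Longrightarrow> a \<in> S \<Longrightarrow> xs \<in> tuples t S \<Longrightarrow>
    f (insert_nth k a xs) = (-1) ^ k * f (a # xs)"
  shows "(\<Sum>xs\<in>tuples (Suc t) S. (\<Sum>k<Suc t. (-1) ^ k * g (xs ! k) (del_nth k xs)) * f xs)
    = real (Suc t) * (\<Sum>a\<in>S. \<Sum>xs\<in>tuples t S. g a xs * f (a # xs))"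
proof -
  have "(\<Sum>xs\<in>tuples (Suc t) S. (\<Sum>k<Suc t. (-1) ^ k * g (xs ! k) (del_nth k xs)) * f xs)
      = (\<Sum>k<Suc t. \<Sum>xs\<in>tuples (Suc t) S. (-1) ^ k * g (xs ! k) (del_nth k xs) * f xs)"
    by (simp only: sum_distrib_right) (rule sum.swap)
  also have "\<dots> = (\<Sum>k<Suc t. \<Sum>a\<in>S. \<Sum>xs\<in>tuples t S. g a xs * f (a # xs))"
  proof (rule sum.cong[OF refl])
    fix k assume "k \<in> {..<Suc t}"
    hence k: "k \<le> t" by simp
    have "(\<Sum>xs\<in>tuples (Suc t) S. (-1) ^ k * g (xs ! k) (del_nth k xs) * f xs)
        = (\<Sum>a\<in>S. \<Sum>xs\<in>tuples t S. (-1) ^ k * g (insert_nth k a xs ! k) (del_nth k (insert_nth k a xs))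
            * f (insert_nth k a xs))"
      by (rule sum_tuples_Suc_insert_nth[OF k])
    also have "\<dots> = (\<Sum>a\<in>S. \<Sum>xs\<in>tuples t S. g a xs * f (a # xs))"
    proof (intro sum.cong refl)
      fix a xs assume a: "a \<in> S" and xs: "xs \<in> tuples t S"
      hence "length xs = t" by (simp add: mem_tuples)
      thus "(-1) ^ k * g (insert_nth k a xs ! k) (del_nth k (insert_nth k a xs)) * f (insert_nth k a xs)
          = g a xs * f (a # xs)"
        using f[OF k a xs] k by (simp add: mult_ac flip: power_add mult_2)
    qed
    finally show "(\<Sum>xs\<in>tuples (Suc t) S. (-1) ^ k * g (xs ! k) (del_nth k xs) * f xs)
        = (\<Sum>a\<in>S. \<Sum>xs\<in>tuples t S. g a xs * f (a # xs))" .
  qed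
  finally show ?thesis by simp
qed

lemma sum_tuples_zip:
  "(\<Sum>xs\<in>tuples k A. \<Sum>ys\<in>tuples k B. f xs ys) = (\<Sum>ps\<in>tuples k (A \<times> B). f (map fst ps) (map snd ps))"
proof -
  have "bij_betw (\<lambda>ps. (map fst ps, map snd ps)) (tuples k (A \<times> B)) (tuples k A \<times> tuples k B)"
    by (rule bij_betw_byWitness[where f' = "\<lambda>(xs, ys). zip xs ys"])
       (fastforce simp: mem_tuples zip_map_fst_snd dest: set_zip_leftD set_zip_rightD)+
  hence "(\<Sum>ps\<in>tuples k (A \<times> B). f (map fst ps) (map snd ps)) = (\<Sum>(xs, ys)\<in>tuples k A \<times> tuples k B. f xs ys)"
    by (simp add: sum.reindex_bij_betw[symmetric])
  thus ?thesis by (simp add: sum.cartesian_product)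
qed

lemma sum_rotate3: "(\<Sum>x\<in>A. \<Sum>y\<in>B. \<Sum>z\<in>C. f x y z) = (\<Sum>z\<in>C. \<Sum>x\<in>A. \<Sum>y\<in>B. f x y z)"
  by (simp add: sum.swap[of _ C])

lemma prod_lessThan_Suc_skip:
  assumes "k \<le> s"
  shows "(\<Prod>l<Suc s. g l) = g k * (\<Prod>l<s. g (if l < k then l else Suc l))"
proof -
  let ?h = "\<lambda>l. if l < k then l else Suc l"
  have "x \<in> ?h ` {..<s}" if "x < Suc s" "x \<noteq> k" for x
  proof (cases "x < k")
    case True
    thus ?thesis using that assms by (intro image_eqI[of _ _ x]) auto
  next
    case False
    thus ?thesis using that by (intro image_eqI[of _ _ "x - 1"]) auto
  qed
  hence split: "{..<Suc s} = insert k (?h ` {..<s})"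
    using assms by auto
  have "(\<Prod>l<Suc s. g l) = g k * prod g (?h ` {..<s})"
    unfolding split by (rule prod.insert) auto
  also have "prod g (?h ` {..<s}) = (\<Prod>l<s. g (?h l))"
    by (rule prod.reindex_cong[OF _ refl refl]) (auto simp: inj_on_def split: if_splits)
  finally show ?thesis .
qed

lemma levi_swap:
  assumes ij: "i < length xs" "j < length xs" "i \<noteq> j"
  shows "levi n (xs[i := xs ! j, j := xs ! i]) = - levi n xs"
proof -
  have set_swapped: "set (xs[i := xs ! j, j := xs ! i]) = set xs"
    using ij by (metis length_list_update nth_list_update_eq set_swap)
  show ?thesis
  proof (cases "length xs = n \<and> set xs = {..<n}")
    case False
    thus ?thesis using set_swapped by (auto simp: levi_def)
  next
    case True
    define f where "f = (\<lambda>l. if l < n then xs ! l else l)"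
    have swapped: "(\<lambda>l. if l < n then xs[i := xs ! j, j := xs ! i] ! l else l) = f \<circ> Transposition.transpose i j"
      using ij True by (auto simp: fun_eq_iff f_def nth_list_update Transposition.transpose_def)
    have "f ` {..<n} = (\<lambda>l. xs ! l) ` {..<n}" by (auto simp: f_def)
    also have "\<dots> = {..<n}" using True by (auto simp: set_conv_nth)
    finally have img: "f ` {..<n} = {..<n}" .
    hence "inj_on f {..<n}" by (intro eq_card_imp_inj_on) auto
    hence "f permutes {..<n}"
      using img by (intro bij_imp_permutes) (auto simp: bij_betw_def f_def)
    hence "permutation f" by (rule permutes_imp_permutation[rotated]) simp
    hence "sign (f \<circ> Transposition.transpose i j) = - sign f"
      using ij by (simp add: sign_compose permutation_swap_id sign_swap_id)
    thus ?thesis using True set_swapped swapped by (simp add: levi_def f_def)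
  qed
qed

lemma levi_move_to_front: "levi n (P @ us @ v # ws) = (-1) ^ length us * levi n (P @ v # us @ ws)"
proof (induction us arbitrary: P)
  case (Cons u us)
  let ?xs = "P @ v # u # us @ ws"
  have adjacent: "?xs[length P := ?xs ! Suc (length P), Suc (length P) := ?xs ! length P] = P @ u # v # us @ ws"
    by (simp add: nth_append list_update_append)
  have "levi n (P @ (u # us) @ v # ws) = (-1) ^ length us * levi n (P @ u # v # us @ ws)"
    using Cons.IH[of "P @ [u]"] by simp
  also have "levi n (P @ u # v # us @ ws) = - levi n ?xs"
    using levi_swap[of "length P" ?xs "Suc (length P)" n] adjacent by simp
  finally show ?case by simp
qed simp

lemma sum_levi_contract_symmetric:
  assumes l: "l < s" and h: "\<And>j js. j < n \<Longrightarrow> js \<in> tuples s {..<n} \<Longrightarrow> h (js ! l) (js[l := j]) = h j js"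
  shows "(\<Sum>j<n. \<Sum>js\<in>tuples s {..<n}. levi n (js @ j # is) * h j js) = 0"
proof -
  define G where "G = (\<lambda>(j, js). levi n (js @ j # is) * h j js)"
  define f :: "nat \<times> nat list \<Rightarrow> nat \<times> nat list" where "f = (\<lambda>(j, js). (js ! l, js[l := j]))"
  let ?X = "{..<n} \<times> tuples s {..<n}"
  have f_X: "f x \<in> ?X" and f_f: "f (f x) = x" and G_f: "G (f x) = - G x" if "x \<in> ?X" for x
  proof -
    obtain j js where x: "x = (j, js)" "j < n" "js \<in> tuples s {..<n}"
      using \<open>x \<in> ?X\<close> by auto
    hence len: "l < length js" using l by (simp add: mem_tuples)
    show "f x \<in> ?X" using x len nth_mem_tuples[OF x(3) l]
      by (auto simp: f_def mem_tuples dest!: set_update_subset_insert[THEN subsetD])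
    show "f (f x) = x" using x len by (simp add: f_def)
    let ?xs = "js @ j # is"
    have "?xs[l := ?xs ! s, s := ?xs ! l] = js[l := j] @ js ! l # is"
      using x len by (simp add: mem_tuples nth_append list_update_append)
    hence "levi n (js[l := j] @ js ! l # is) = - levi n ?xs"
      using levi_swap[of l ?xs s n] x len by (simp add: mem_tuples)
    thus "G (f x) = - G x" using x h[of j js] by (simp add: G_def f_def)
  qed
  have "bij_betw f ?X ?X" by (rule bij_betw_byWitness[where f' = f]) (use f_X f_f in blast)+
  hence "sum G ?X = sum (G \<circ> f) ?X" by (simp add: sum.reindex_bij_betw)
  also have "\<dots> = - sum G ?X" using G_f by (simp add: sum_negf)
  finally have "sum G ?X = 0" by simp
  thus ?thesis by (simp add: G_def sum.cartesian_product)
qed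

section \<open>Formal derivatives\<close>

lemma fder_lincomb_pd:
  assumes "finite S" "\<And>c. pd c H p = (\<Sum>x\<in>S. a x * pd c (F x) p)"
  shows "fder n m q i H p = (\<Sum>x\<in>S. a x * fder n m q i (F x) p)"
proof -
  define w :: "nat list \<Rightarrow> real" where "w js = (\<Prod>l<n. fact (count (mset js) l)) / fact (length js)" for js
  have fder_w: "fder n m q i G p = pd (XC i) G p + (\<Sum>k<q. \<Sum>\<sigma><m. \<Sum>js \<in> tuples k {..<n}.
      p (YC \<sigma> (mset (i # js))) * w js * pd (YC \<sigma> (mset js)) G p)" for G
    by (simp add: fder_def wpd_def w_def mult.assoc)
  have "fder n m q i H p = (\<Sum>x\<in>S. a x * pd (XC i) (F x) p) +
      (\<Sum>k<q. \<Sum>\<sigma><m. \<Sum>js \<in> tuples k {..<n}. \<Sum>x\<in>S.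
        a x * (p (YC \<sigma> (mset (i # js))) * w js * pd (YC \<sigma> (mset js)) (F x) p))"
    unfolding fder_w assms(2) by (simp add: sum_distrib_left mult_ac)
  also have "\<dots> = (\<Sum>x\<in>S. a x * pd (XC i) (F x) p) +
      (\<Sum>x\<in>S. a x * (\<Sum>k<q. \<Sum>\<sigma><m. \<Sum>js \<in> tuples k {..<n}.
        p (YC \<sigma> (mset (i # js))) * w js * pd (YC \<sigma> (mset js)) (F x) p))"
    by (simp add: sum_distrib_left sum.swap[of _ S])
  also have "\<dots> = (\<Sum>x\<in>S. a x * fder n m q i (F x) p)"
    unfolding fder_w by (simp add: sum.distrib distrib_left)
  finally show ?thesis .
qed

lemma fder_sum:
  "finite S \<Longrightarrow> (\<And>x. x \<in> S \<Longrightarrow> partially_differentiable_at (F x) p) \<Longrightarrow>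
    fder n m q i (\<lambda>y. \<Sum>x\<in>S. F x y) p = (\<Sum>x\<in>S. fder n m q i (F x) p)"
  using fder_lincomb_pd[of S "\<lambda>y. \<Sum>x\<in>S. F x y" p "\<lambda>_. 1" F] by (simp add: pd_sum)

lemma fder_mult:
  "partially_differentiable_at F p \<Longrightarrow> partially_differentiable_at G p \<Longrightarrow>
    fder n m q i (\<lambda>x. F x * G x) p = fder n m q i F p * G p + F p * fder n m q i G p"
  using fder_lincomb_pd[of "{True, False}" "\<lambda>x. F x * G x" p "\<lambda>b. if b then G p else F p"
      "\<lambda>b. if b then F else G"]
  by (simp add: pd_mult mult_ac)

lemma fder_const_mult:
  "partially_differentiable_at F p \<Longrightarrow> fder n m q i (\<lambda>x. a * F x) p = a * fder n m q i F p"
  using fder_lincomb_pd[of "{()}" "\<lambda>x. a * F x" p "\<lambda>_. a" "\<lambda>_. F"]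
  by (simp add: pd_mult pd_const partially_differentiable_at_const)

lemma fder_prod:
  "finite S \<Longrightarrow> (\<And>x. x \<in> S \<Longrightarrow> partially_differentiable_at (F x) p) \<Longrightarrow>
    fder n m q i (\<lambda>y. \<Prod>x\<in>S. F x y) p = (\<Sum>x\<in>S. fder n m q i (F x) p * (\<Prod>y\<in>S - {x}. F y p))"
  using fder_lincomb_pd[of S "\<lambda>y. \<Prod>x\<in>S. F x y" p "\<lambda>x. \<Prod>y\<in>S - {x}. F y p" F]
  by (simp add: pd_prod mult_ac)

lemma fder_Suc:
  "fder n m (Suc q) i F p = fder n m q i F p +
    (\<Sum>\<sigma><m. \<Sum>js \<in> tuples q {..<n}. p (YC \<sigma> (mset (i # js))) * wpd n \<sigma> js F p)"
  by (simp add: fder_def)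

lemma fder_diff_fder_pred:
  assumes "r \<ge> 1"
  shows "fder n m r j F p - fder n m (r - 1) j F p =
    (\<Sum>(I, \<sigma>)\<in>tuples (r - 1) {..<n} \<times> {..<m}. p (YC \<sigma> (mset (I @ [j]))) * wpd n \<sigma> I F p)"
  using fder_Suc[of n m "r - 1" j F p] assms
  by (simp add: sum.cartesian_product[symmetric] sum.swap[of _ "{..<m}"])

lemma card_permutations_of_multiset_weight:
  fixes M :: "nat multiset"
  assumes "set_mset M \<subseteq> {..<n}"
  shows "real (card (permutations_of_multiset M)) * ((\<Prod>l<n. fact (count M l)) / fact (size M)) = 1"
proof -
  have "(\<Prod>l<n. fact (count M l)) = (\<Prod>x\<in>set_mset M. fact (count M x) :: nat)"
    using assms by (intro prod.mono_neutral_right) (auto simp: not_in_iff)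
  hence "card (permutations_of_multiset M) * (\<Prod>l<n. fact (count M l)) = (fact (size M) :: nat)"
    using card_permutations_of_multiset_aux[of M] by simp
  hence "real (card (permutations_of_multiset M) * (\<Prod>l<n. fact (count M l))) = fact (size M)"
    by (simp only: of_nat_fact)
  hence "real (card (permutations_of_multiset M)) * (\<Prod>l<n. fact (count M l)) = fact (size M)"
    by (simp only: of_nat_mult of_nat_prod of_nat_fact)
  thus ?thesis by (simp add: field_simps)
qed

(* The weight of \<open>\<partial>\<^sup>J\<^sub>\<sigma>\<close> is the reciprocal of the number of orderings of \<open>J\<close>, so the sum over
   ordered tuples in the formal derivative meets the coordinate \<open>y\<^sup>\<sigma>\<^sub>M\<close> with total weight one. *)
lemma fder_coord:
  assumes "\<sigma> < m" "set_mset M \<subseteq> {..<n}" "size M < q"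
  shows "fder n m q j (\<lambda>x. x (YC \<sigma> M)) p = p (YC \<sigma> (add_mset j M))"
proof -
  define w :: real where "w = (\<Prod>l<n. fact (count M l)) / fact (size M)"
  define C where "C = p (YC \<sigma> (add_mset j M)) * w"
  have filter: "{js \<in> tuples k {..<n}. mset js = M} =
      (if k = size M then permutations_of_multiset M else {})" for k
    using assms(2) by (auto simp: mem_tuples permutations_of_multiset_def)
  have level: "(\<Sum>\<sigma>'<m. \<Sum>js \<in> tuples k {..<n}.
      p (YC \<sigma>' (mset (j # js))) * wpd n \<sigma>' js (\<lambda>x. x (YC \<sigma> M)) p)
      = (if k = size M then real (card (permutations_of_multiset M)) * C else 0)" for k
  proof -
    have "(\<Sum>\<sigma>'<m. \<Sum>js \<in> tuples k {..<n}.
        p (YC \<sigma>' (mset (j # js))) * wpd n \<sigma>' js (\<lambda>x. x (YC \<sigma> M)) p)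
      = (\<Sum>\<sigma>'<m. \<Sum>js \<in> tuples k {..<n}. if \<sigma>' = \<sigma> then (if mset js = M then C else 0) else 0)"
      by (intro sum.cong refl) (auto simp: wpd_def pd_coord C_def w_def)
    also have "\<dots> = (\<Sum>js \<in> tuples k {..<n}. if mset js = M then C else 0)"
      using assms(1) by (subst sum.swap) (simp add: sum.delta)
    also have "\<dots> = (\<Sum>js \<in> {js \<in> tuples k {..<n}. mset js = M}. C)"
      using sum.inter_filter[of "tuples k {..<n}" "\<lambda>_. C" "\<lambda>js. mset js = M"] by simp
    finally show ?thesis by (simp add: filter)
  qed
  have "fder n m q j (\<lambda>x. x (YC \<sigma> M)) p =
      (\<Sum>k<q. if k = size M then real (card (permutations_of_multiset M)) * C else 0)"
    unfolding fder_def level by (simp add: pd_coord)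
  also have "\<dots> = p (YC \<sigma> (add_mset j M))"
    using assms card_permutations_of_multiset_weight[OF assms(2)] by (simp add: C_def w_def)
  finally show ?thesis .
qed

definition depends_upto_order :: "nat \<Rightarrow> nat \<Rightarrow> nat \<Rightarrow> (jpoint \<Rightarrow> real) \<Rightarrow> bool" where
  "depends_upto_order n m k F \<longleftrightarrow> (\<forall>p q. (\<forall>c\<in>jcoords n m k. p c = q c) \<longrightarrow> F p = F q)"

lemma jet_smooth_iff: "jet_smooth n m k V F \<longleftrightarrow> depends_upto_order n m k F \<and> smooth_on V F"
  by (simp add: jet_smooth_def depends_upto_order_def)

lemma jcoords_mono: "k \<le> k' \<Longrightarrow> jcoords n m k \<subseteq> jcoords n m k'"
  unfolding jcoords_def by auto

lemma depends_upto_order_mono: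
  "k \<le> k' \<Longrightarrow> depends_upto_order n m k F \<Longrightarrow> depends_upto_order n m k' F"
  unfolding depends_upto_order_def using jcoords_mono by blast

lemma depends_upto_order_const: "depends_upto_order n m k (\<lambda>x. a)"
  by (simp add: depends_upto_order_def)

lemma depends_upto_order_mult:
  "depends_upto_order n m k F \<Longrightarrow> depends_upto_order n m k G \<Longrightarrow> depends_upto_order n m k (\<lambda>x. F x * G x)"
  unfolding depends_upto_order_def by metis

lemma depends_upto_order_sum:
  "(\<And>i. i \<in> S \<Longrightarrow> depends_upto_order n m k (F i)) \<Longrightarrow> depends_upto_order n m k (\<lambda>x. \<Sum>i\<in>S. F i x)"
  unfolding depends_upto_order_def by (metis (mono_tags, lifting) sum.cong)

lemma pd_eq_0_if_not_depends:
  assumes "depends_upto_order n m k F" "c \<notin> jcoords n m k"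
  shows "pd c F p = 0"
proof -
  have "F (p(c := p c + t)) = F p" for t
    using assms unfolding depends_upto_order_def by (metis fun_upd_other)
  thus ?thesis by (simp add: pd_def)
qed

lemma fder_Suc_eq_if_depends:
  assumes "depends_upto_order n m k F" "k < q"
  shows "fder n m (Suc q) i F p = fder n m q i F p"
proof -
  have "wpd n \<sigma> js F p = 0" if "js \<in> tuples q {..<n}" for \<sigma> js
    using that assms by (auto simp: wpd_def jcoords_def mem_tuples intro!: pd_eq_0_if_not_depends)
  thus ?thesis by (simp add: fder_Suc)
qed

section \<open>Hyper-Jacobians\<close>

lemma hyperjac_insert_nth_expand:
  assumes "length \<sigma>s = length Is" "k \<le> length Is"
  shows "hyperjac n (insert_nth k I Is) (insert_nth k \<sigma> \<sigma>s) is p = (-1) ^ k *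
    (\<Sum>j<n. \<Sum>js\<in>tuples (length Is) {..<n}. levi n (j # js @ is) *
      (p (YC \<sigma> (mset (I @ [j]))) * (\<Prod>l<length Is. p (YC (\<sigma>s ! l) (mset (Is ! l @ [js ! l]))))))"
proof -
  let ?s = "length Is"
  have "hyperjac n (insert_nth k I Is) (insert_nth k \<sigma> \<sigma>s) is p =
     (\<Sum>j<n. \<Sum>js\<in>tuples ?s {..<n}. levi n (insert_nth k j js @ is) *
        (\<Prod>l<Suc ?s. p (YC (insert_nth k \<sigma> \<sigma>s ! l) (mset (insert_nth k I Is ! l @ [insert_nth k j js ! l])))))"
    unfolding hyperjac_def using assms by (simp add: sum_tuples_Suc_insert_nth[where k = k])
  also have "\<dots> = (\<Sum>j<n. \<Sum>js\<in>tuples ?s {..<n}. (-1) ^ k * (levi n (j # js @ is) *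
        (p (YC \<sigma> (mset (I @ [j]))) * (\<Prod>l<?s. p (YC (\<sigma>s ! l) (mset (Is ! l @ [js ! l])))))))"
  proof (intro sum.cong refl)
    fix j js assume "js \<in> tuples ?s {..<n}"
    hence len: "length js = ?s" by (simp add: mem_tuples)
    have "levi n (insert_nth k j js @ is) = levi n ([] @ take k js @ j # drop k js @ is)"
      by (simp add: insert_nth_def)
    also have "\<dots> = (-1) ^ k * levi n (j # take k js @ drop k js @ is)"
      using levi_move_to_front[of n "[]" "take k js" j "drop k js @ is"] assms len by simp
    also have "take k js @ drop k js @ is = js @ is"
      by (simp flip: append_assoc)
    finally have "levi n (insert_nth k j js @ is) = (-1) ^ k * levi n (j # js @ is)" .
    moreover have "(\<Prod>l<Suc ?s. p (YC (insert_nth k \<sigma> \<sigma>s ! l) (mset (insert_nth k I Is ! l @ [insert_nth k j js ! l])))) =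
        p (YC \<sigma> (mset (I @ [j]))) * (\<Prod>l<?s. p (YC (\<sigma>s ! l) (mset (Is ! l @ [js ! l]))))"
      using assms len
      by (simp add: prod_lessThan_Suc_skip[where k = k] nth_insert_nth_skip del: prod.lessThan_Suc)
    ultimately show "levi n (insert_nth k j js @ is) *
        (\<Prod>l<Suc ?s. p (YC (insert_nth k \<sigma> \<sigma>s ! l) (mset (insert_nth k I Is ! l @ [insert_nth k j js ! l])))) =
      (-1) ^ k * (levi n (j # js @ is) *
        (p (YC \<sigma> (mset (I @ [j]))) * (\<Prod>l<?s. p (YC (\<sigma>s ! l) (mset (Is ! l @ [js ! l]))))))"
      by simp
  qed
  finally show ?thesis by (simp add: sum_distrib_left)
qed

lemma hyperjac_insert_nth:
  assumes "length \<sigma>s = length Is" "k \<le> length Is"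
  shows "hyperjac n (insert_nth k I Is) (insert_nth k \<sigma> \<sigma>s) is p = (-1) ^ k * hyperjac n (I # Is) (\<sigma> # \<sigma>s) is p"
  using hyperjac_insert_nth_expand[OF assms] hyperjac_insert_nth_expand[OF assms(1), of 0] by simp

lemma hyperjac_Cons:
  assumes "length \<sigma>s = length Is"
  shows "hyperjac n (I # Is) (\<sigma> # \<sigma>s) is p =
    (-1) ^ length Is * (\<Sum>j<n. p (YC \<sigma> (mset (I @ [j]))) * hyperjac n Is \<sigma>s (j # is) p)"
proof -
  have "levi n (j # js @ is) = (-1) ^ length Is * levi n (js @ j # is)"
    if "js \<in> tuples (length Is) {..<n}" for j js
    using levi_move_to_front[of n "[]" js j "is"] that
    by (simp add: mem_tuples power_mult_distrib[symmetric] flip: power_add mult_2)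
  thus ?thesis
    using hyperjac_insert_nth_expand[OF assms, of 0]
    by (simp add: hyperjac_def sum_distrib_left mult_ac cong: sum.cong)
qed

lemma hyperjac_insert_nth_base:
  "k \<le> length is \<Longrightarrow> hyperjac n Is \<sigma>s (insert_nth k j is) p = (-1) ^ k * hyperjac n Is \<sigma>s (j # is) p"
proof -
  assume k: "k \<le> length is"
  have "levi n (js @ insert_nth k j is) = (-1) ^ k * levi n (js @ j # is)" for js
    using levi_move_to_front[of n js "take k is" j "drop k is"] k
    by (simp add: insert_nth_def min_def)
  thus ?thesis by (simp add: hyperjac_def sum_distrib_left mult.assoc)
qed

lemma hyperjac_depends_upto_order:
  assumes "set Is \<subseteq> tuples k {..<n}" "set \<sigma>s \<subseteq> {..<m}" "length \<sigma>s = length Is"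
  shows "depends_upto_order n m (Suc k) (hyperjac n Is \<sigma>s is)"
  unfolding depends_upto_order_def hyperjac_def
proof (intro allI impI sum.cong refl arg_cong2[where f = "(*)"] prod.cong)
  fix x y :: jpoint and js l
  assume same: "\<forall>c\<in>jcoords n m (Suc k). x c = y c"
    and js: "js \<in> tuples (length Is) {..<n}" and l: "l \<in> {..<length Is}"
  have "Is ! l \<in> tuples k {..<n}" "\<sigma>s ! l \<in> set \<sigma>s" "js ! l < n"
    using assms l nth_mem_tuples[OF js, of l] by auto
  hence "YC (\<sigma>s ! l) (mset (Is ! l @ [js ! l])) \<in> jcoords n m (Suc k)"
    using assms(2) by (auto simp: jcoords_def mem_tuples)
  thus "x (YC (\<sigma>s ! l) (mset (Is ! l @ [js ! l]))) = y (YC (\<sigma>s ! l) (mset (Is ! l @ [js ! l])))"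
    using same by blast
qed

lemma smooth_upto_on_hyperjac: "open V \<Longrightarrow> smooth_upto_on k V (hyperjac n Is \<sigma>s is)"
  unfolding hyperjac_def[abs_def]
  by (intro smooth_upto_on_sum smooth_upto_on_mult smooth_upto_on_prod smooth_upto_on_const
      smooth_upto_on_coord finite_tuples finite_lessThan)

lemma fder_hyperjac:
  assumes Is: "set Is \<subseteq> tuples k {..<n}" and \<sigma>s: "set \<sigma>s \<subseteq> {..<m}" "length \<sigma>s = length Is"
    and q: "Suc k < q"
  shows "fder n m q j (hyperjac n Is \<sigma>s is) p = (\<Sum>js\<in>tuples (length Is) {..<n}. levi n (js @ is) *
    (\<Sum>l<length Is. p (YC (\<sigma>s ! l) (add_mset j (mset (Is ! l @ [js ! l])))) *
      (\<Prod>l'\<in>{..<length Is} - {l}. p (YC (\<sigma>s ! l') (mset (Is ! l' @ [js ! l']))))))"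
proof -
  let ?s = "length Is"
  let ?y = "\<lambda>l a (x :: jpoint). x (YC (\<sigma>s ! l) (mset (Is ! l @ [a])))"
  have pdiff_y: "partially_differentiable_at (?y l a) x" for l a x
    by (rule partially_differentiable_at_coord)
  have fder_y: "fder n m q j (?y l a) p = p (YC (\<sigma>s ! l) (add_mset j (mset (Is ! l @ [a]))))"
    if "l < ?s" "a < n" for l a
  proof (rule fder_coord)
    have "\<sigma>s ! l \<in> set \<sigma>s" using that \<sigma>s(2) by simp
    thus "\<sigma>s ! l < m" using \<sigma>s(1) by auto
    have "Is ! l \<in> tuples k {..<n}" using that Is by auto
    thus "set_mset (mset (Is ! l @ [a])) \<subseteq> {..<n}" "size (mset (Is ! l @ [a])) < q"
      using q that by (auto simp: mem_tuples)
  qed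
  have "fder n m q j (hyperjac n Is \<sigma>s is) p =
      fder n m q j (\<lambda>x. \<Sum>js\<in>tuples ?s {..<n}. levi n (js @ is) * (\<Prod>l<?s. ?y l (js ! l) x)) p"
    by (simp add: hyperjac_def[abs_def])
  also have "\<dots> = (\<Sum>js\<in>tuples ?s {..<n}. fder n m q j (\<lambda>x. levi n (js @ is) * (\<Prod>l<?s. ?y l (js ! l) x)) p)"
    by (rule fder_sum)
       (auto intro!: partially_differentiable_at_mult partially_differentiable_at_const
         partially_differentiable_at_prod partially_differentiable_at_coord)
  also have "\<dots> = (\<Sum>js\<in>tuples ?s {..<n}. levi n (js @ is) * fder n m q j (\<lambda>x. \<Prod>l<?s. ?y l (js ! l) x) p)"
    by (intro sum.cong refl fder_const_mult partially_differentiable_at_prod pdiff_y finite_lessThan)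
  also have "\<dots> = (\<Sum>js\<in>tuples ?s {..<n}. levi n (js @ is) *
      (\<Sum>l<?s. fder n m q j (?y l (js ! l)) p * (\<Prod>l'\<in>{..<?s} - {l}. ?y l' (js ! l') p)))"
    by (intro sum.cong refl arg_cong2[where f = "(*)"] fder_prod finite_lessThan pdiff_y)
  also have "\<dots> = (\<Sum>js\<in>tuples ?s {..<n}. levi n (js @ is) *
      (\<Sum>l<?s. p (YC (\<sigma>s ! l) (add_mset j (mset (Is ! l @ [js ! l])))) *
        (\<Prod>l'\<in>{..<?s} - {l}. ?y l' (js ! l') p)))"
  proof (intro sum.cong refl arg_cong2[where f = "(*)"])
    fix js l assume "js \<in> tuples ?s {..<n}" "l \<in> {..<?s}"
    thus "fder n m q j (?y l (js ! l)) p = p (YC (\<sigma>s ! l) (add_mset j (mset (Is ! l @ [js ! l]))))"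
      using nth_mem_tuples[of js ?s "{..<n}" l] by (intro fder_y) auto
  qed
  finally show ?thesis .
qed

lemma hyperjac_divergence_free:
  assumes "set Is \<subseteq> tuples k {..<n}" "set \<sigma>s \<subseteq> {..<m}" "length \<sigma>s = length Is" "Suc k < q"
  shows "(\<Sum>j<n. fder n m q j (hyperjac n Is \<sigma>s (j # is)) p) = 0"
proof -
  let ?s = "length Is"
  define h where "h l j js = p (YC (\<sigma>s ! l) (add_mset j (mset (Is ! l @ [js ! l])))) *
      (\<Prod>l'\<in>{..<?s} - {l}. p (YC (\<sigma>s ! l') (mset (Is ! l' @ [js ! l']))))" for l j js
  have "(\<Sum>j<n. fder n m q j (hyperjac n Is \<sigma>s (j # is)) p) =
      (\<Sum>j<n. \<Sum>js\<in>tuples ?s {..<n}. \<Sum>l<?s. levi n (js @ j # is) * h l j js)"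
    by (simp add: fder_hyperjac[OF assms] h_def sum_distrib_left)
  also have "\<dots> = (\<Sum>l<?s. \<Sum>j<n. \<Sum>js\<in>tuples ?s {..<n}. levi n (js @ j # is) * h l j js)"
    by (simp add: sum.swap[of _ "{..<length Is}"])
  also have "\<dots> = 0"
  proof (rule sum.neutral, rule ballI)
    fix l assume "l \<in> {..<?s}"
    thus "(\<Sum>j<n. \<Sum>js\<in>tuples ?s {..<n}. levi n (js @ j # is) * h l j js) = 0"
      by (intro sum_levi_contract_symmetric)
         (auto simp: h_def mem_tuples add_mset_commute intro!: prod.cong)
  qed
  finally show ?thesis .
qed

section \<open>The Lagrangian\<close>

lemma sum_alternating_base_hyperjac:
  "(\<Sum>zs\<in>tuples (Suc t) {..<n}. (\<Sum>k<Suc t. (-1) ^ k * G (zs ! k) (del_nth k zs)) * hyperjac n Is \<sigma>s zs p)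
    = real (Suc t) * (\<Sum>zs\<in>tuples t {..<n}. \<Sum>j<n. G j zs * hyperjac n Is \<sigma>s (j # zs) p)"
  by (subst sum_tuples_alternating_del_nth)
     (auto simp: mem_tuples hyperjac_insert_nth_base sum.swap[of _ "{..<n}"])

lemma sum_alternating_fibre_hyperjac:
  fixes A :: afam
  assumes r: "r \<ge> 1"
  shows "(\<Sum>Is\<in>tuples (Suc s) (tuples (r - 1) {..<n}). \<Sum>\<sigma>s\<in>tuples (Suc s) {..<m}.
      (\<Sum>k<Suc s. (-1) ^ k * wpd n (\<sigma>s ! k) (Is ! k) (A (del_nth k Is) (del_nth k \<sigma>s) zs) p)
        * hyperjac n Is \<sigma>s zs p)
    = real (Suc s) * (-1) ^ s * (\<Sum>Is\<in>tuples s (tuples (r - 1) {..<n}). \<Sum>\<sigma>s\<in>tuples s {..<m}. \<Sum>j<n.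
      (fder n m r j (A Is \<sigma>s zs) p - fder n m (r - 1) j (A Is \<sigma>s zs) p) * hyperjac n Is \<sigma>s (j # zs) p)"
proof -
  let ?P = "tuples (r - 1) {..<n} \<times> {..<m}"
  define g where "g = (\<lambda>(I, \<sigma>) qs. wpd n \<sigma> I (A (map fst qs) (map snd qs) zs) p)"
  define f where "f ps = hyperjac n (map fst ps) (map snd ps) zs p" for ps
  define Y where "Y = (\<lambda>(I, \<sigma>) j. p (YC \<sigma> (mset (I @ [j]))))"
  define H where "H qs j = hyperjac n (map fst qs) (map snd qs) (j # zs) p" for qs j
  have f_Cons: "f (a # qs) = (-1) ^ length qs * (\<Sum>j<n. Y a j * H qs j)" for a qs
    by (simp add: f_def Y_def H_def hyperjac_Cons case_prod_unfold)
  have "(\<Sum>Is\<in>tuples (Suc s) (tuples (r - 1) {..<n}). \<Sum>\<sigma>s\<in>tuples (Suc s) {..<m}.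
      (\<Sum>k<Suc s. (-1) ^ k * wpd n (\<sigma>s ! k) (Is ! k) (A (del_nth k Is) (del_nth k \<sigma>s) zs) p)
        * hyperjac n Is \<sigma>s zs p)
    = (\<Sum>ps\<in>tuples (Suc s) ?P. (\<Sum>k<Suc s. (-1) ^ k * g (ps ! k) (del_nth k ps)) * f ps)"
    unfolding sum_tuples_zip
    by (intro sum.cong refl arg_cong2[where f = "(*)"])
       (auto simp: mem_tuples g_def f_def map_del_nth case_prod_unfold)
  also have "\<dots> = real (Suc s) * (\<Sum>a\<in>?P. \<Sum>qs\<in>tuples s ?P. g a qs * f (a # qs))"
    by (rule sum_tuples_alternating_del_nth)
       (simp add: f_def mem_tuples map_insert_nth hyperjac_insert_nth)
  also have "\<dots> = real (Suc s) * (\<Sum>qs\<in>tuples s ?P. \<Sum>a\<in>?P. g a qs * ((-1) ^ s * (\<Sum>j<n. Y a j * H qs j)))"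
    by (subst sum.swap, intro arg_cong2[where f = "(*)"] sum.cong refl) (simp add: f_Cons mem_tuples)
  also have "\<dots> = real (Suc s) * (-1) ^ s * (\<Sum>qs\<in>tuples s ?P. \<Sum>j<n. (\<Sum>a\<in>?P. Y a j * g a qs) * H qs j)"
    by (simp add: sum_distrib_left sum_distrib_right mult_ac) (intro sum.cong refl, rule sum.swap)
  also have "\<dots> = real (Suc s) * (-1) ^ s * (\<Sum>Is\<in>tuples s (tuples (r - 1) {..<n}). \<Sum>\<sigma>s\<in>tuples s {..<m}. \<Sum>j<n.
      (fder n m r j (A Is \<sigma>s zs) p - fder n m (r - 1) j (A Is \<sigma>s zs) p) * hyperjac n Is \<sigma>s (j # zs) p)"
    unfolding sum_tuples_zip fder_diff_fder_pred[OF r]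
    by (simp add: Y_def g_def H_def case_prod_unfold)
  finally show ?thesis .
qed

definition contracted_fder :: "nat \<Rightarrow> nat \<Rightarrow> nat \<Rightarrow> afam \<Rightarrow> nat \<Rightarrow> nat \<Rightarrow> jpoint \<Rightarrow> real" where
  "contracted_fder n m r A s q p = (\<Sum>Is\<in>tuples s (tuples (r - 1) {..<n}). \<Sum>\<sigma>s\<in>tuples s {..<m}.
     \<Sum>zs\<in>tuples (n - 1 - s) {..<n}. \<Sum>j<n. fder n m q j (A Is \<sigma>s zs) p * hyperjac n Is \<sigma>s (j # zs) p)"

definition calL_vertical :: "nat \<Rightarrow> afam \<Rightarrow> afam" where
  "calL_vertical n A Is \<sigma>s is p =
     (\<Sum>k<length Is. (-1) ^ k * wpd n (\<sigma>s ! k) (Is ! k) (A (del_nth k Is) (del_nth k \<sigma>s) is) p)"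

definition calL_horizontal :: "nat \<Rightarrow> nat \<Rightarrow> nat \<Rightarrow> afam \<Rightarrow> afam" where
  "calL_horizontal n m r A Is \<sigma>s is p =
     (\<Sum>k<length is. (-1) ^ (length Is + k) * fder n m (r - 1) (is ! k) (A Is \<sigma>s (del_nth k is)) p)"

definition Lagr_level :: "nat \<Rightarrow> nat \<Rightarrow> nat \<Rightarrow> afam \<Rightarrow> nat \<Rightarrow> jpoint \<Rightarrow> real" where
  "Lagr_level n m r F s p = (\<Sum>Is\<in>tuples s (tuples (r - 1) {..<n}). \<Sum>\<sigma>s\<in>tuples s {..<m}.
     \<Sum>is\<in>tuples (n - s) {..<n}. F Is \<sigma>s is p * hyperjac n Is \<sigma>s is p)"

lemma Lagr_eq_sum_Lagr_level:
  "Lagr n m r A p = (\<Sum>s\<le>n. (Lagr_level n m r (calL_vertical n A) s p + Lagr_level n m r (calL_horizontal n m r A) s p)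
     / (fact s * fact (n - s)))"
  unfolding Lagr_def Lagr_level_def calL_def calL_vertical_def calL_horizontal_def
  by (simp add: distrib_right sum.distrib add_divide_distrib)

lemma Lagr_level_calL_vertical_Suc:
  assumes "r \<ge> 1"
  shows "Lagr_level n m r (calL_vertical n A) (Suc s) p
    = real (Suc s) * (-1) ^ s * (contracted_fder n m r A s r p - contracted_fder n m r A s (r - 1) p)"
proof -
  have "Lagr_level n m r (calL_vertical n A) (Suc s) p =
      (\<Sum>zs\<in>tuples (n - Suc s) {..<n}. \<Sum>Is\<in>tuples (Suc s) (tuples (r - 1) {..<n}). \<Sum>\<sigma>s\<in>tuples (Suc s) {..<m}.
        (\<Sum>k<Suc s. (-1) ^ k * wpd n (\<sigma>s ! k) (Is ! k) (A (del_nth k Is) (del_nth k \<sigma>s) zs) p)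
          * hyperjac n Is \<sigma>s zs p)"
    unfolding Lagr_level_def calL_vertical_def by (subst sum_rotate3, intro sum.cong refl) (simp add: mem_tuples)
  also have "\<dots> = (\<Sum>zs\<in>tuples (n - Suc s) {..<n}. real (Suc s) * (-1) ^ s *
      (\<Sum>Is\<in>tuples s (tuples (r - 1) {..<n}). \<Sum>\<sigma>s\<in>tuples s {..<m}. \<Sum>j<n.
        (fder n m r j (A Is \<sigma>s zs) p - fder n m (r - 1) j (A Is \<sigma>s zs) p) * hyperjac n Is \<sigma>s (j # zs) p))"
    by (simp only: sum_alternating_fibre_hyperjac[OF assms])
  also have "\<dots> = real (Suc s) * (-1) ^ s *
      (\<Sum>Is\<in>tuples s (tuples (r - 1) {..<n}). \<Sum>\<sigma>s\<in>tuples s {..<m}. \<Sum>zs\<in>tuples (n - Suc s) {..<n}. \<Sum>j<n.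
        (fder n m r j (A Is \<sigma>s zs) p - fder n m (r - 1) j (A Is \<sigma>s zs) p) * hyperjac n Is \<sigma>s (j # zs) p)"
    by (simp only: sum_distrib_left[symmetric]) (subst sum_rotate3[symmetric], rule refl)
  also have "\<dots> = real (Suc s) * (-1) ^ s * (contracted_fder n m r A s r p - contracted_fder n m r A s (r - 1) p)"
    unfolding contracted_fder_def by (simp add: sum_subtractf left_diff_distrib)
  finally show ?thesis .
qed

lemma Lagr_level_calL_horizontal:
  assumes "s < n"
  shows "Lagr_level n m r (calL_horizontal n m r A) s p = real (n - s) * (-1) ^ s * contracted_fder n m r A s (r - 1) p"
proof -
  have nt: "n - s = Suc (n - 1 - s)" using assms by simp
  have sign: "(\<Sum>k<n - s. (-1) ^ (s + k) * X k) = (-1) ^ s * (\<Sum>k<n - s. (-1) ^ k * X k)" for X :: "nat \<Rightarrow> real"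
    by (simp add: power_add sum_distrib_left mult.assoc)
  have "Lagr_level n m r (calL_horizontal n m r A) s p =
      (\<Sum>Is\<in>tuples s (tuples (r - 1) {..<n}). \<Sum>\<sigma>s\<in>tuples s {..<m}. \<Sum>zs\<in>tuples (n - s) {..<n}.
        (\<Sum>k<n - s. (-1) ^ (s + k) * fder n m (r - 1) (zs ! k) (A Is \<sigma>s (del_nth k zs)) p)
          * hyperjac n Is \<sigma>s zs p)"
    unfolding Lagr_level_def calL_horizontal_def by (intro sum.cong refl) (simp add: mem_tuples)
  also have "\<dots> = (\<Sum>Is\<in>tuples s (tuples (r - 1) {..<n}). \<Sum>\<sigma>s\<in>tuples s {..<m}. (-1) ^ s *
      (\<Sum>zs\<in>tuples (Suc (n - 1 - s)) {..<n}.
        (\<Sum>k<Suc (n - 1 - s). (-1) ^ k * fder n m (r - 1) (zs ! k) (A Is \<sigma>s (del_nth k zs)) p)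
          * hyperjac n Is \<sigma>s zs p))"
    unfolding sign unfolding nt by (simp only: mult.assoc sum_distrib_left[symmetric])
  also have "\<dots> = (\<Sum>Is\<in>tuples s (tuples (r - 1) {..<n}). \<Sum>\<sigma>s\<in>tuples s {..<m}. (-1) ^ s *
      (real (Suc (n - 1 - s)) * (\<Sum>zs\<in>tuples (n - 1 - s) {..<n}. \<Sum>j<n.
        fder n m (r - 1) j (A Is \<sigma>s zs) p * hyperjac n Is \<sigma>s (j # zs) p)))"
    by (intro sum.cong refl arg_cong2[where f = "(*)"]) (rule sum_alternating_base_hyperjac)
  also have "\<dots> = real (n - s) * (-1) ^ s * contracted_fder n m r A s (r - 1) p"
    unfolding contracted_fder_def nt by (simp add: sum_distrib_left mult_ac)
  finally show ?thesis .
qed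

lemma Lagr_eq_sum_contracted_fder:
  assumes r: "r \<ge> 1"
  shows "Lagr n m r A p = (\<Sum>s<n. (-1) ^ s / (fact s * fact (n - 1 - s)) * contracted_fder n m r A s r p)"
proof -
  let ?vert = "\<lambda>s. Lagr_level n m r (calL_vertical n A) s p"
  let ?hor = "\<lambda>s. Lagr_level n m r (calL_horizontal n m r A) s p"
  let ?C = "\<lambda>s q. contracted_fder n m r A s q p"
  have "?vert 0 = 0" "?hor n = 0" by (simp_all add: Lagr_level_def calL_vertical_def calL_horizontal_def)
  have "(\<Sum>s\<le>n. ?vert s / (fact s * fact (n - s))) = (\<Sum>s<n. ?vert (Suc s) / (fact (Suc s) * fact (n - Suc s)))"
    using \<open>?vert 0 = 0\<close> by (subst sum.atMost_shift) simp
  moreover have "(\<Sum>s\<le>n. ?hor s / (fact s * fact (n - s))) = (\<Sum>s<n. ?hor s / (fact s * fact (n - s)))"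
    using \<open>?hor n = 0\<close> by (simp add: lessThan_Suc_atMost[symmetric])
  ultimately have "Lagr n m r A p =
      (\<Sum>s<n. ?vert (Suc s) / (fact (Suc s) * fact (n - Suc s))) + (\<Sum>s<n. ?hor s / (fact s * fact (n - s)))"
    by (simp only: Lagr_eq_sum_Lagr_level add_divide_distrib sum.distrib)
  also have "\<dots> = (\<Sum>s<n. (-1) ^ s / (fact s * fact (n - 1 - s)) * (?C s r - ?C s (r - 1)))
      + (\<Sum>s<n. (-1) ^ s / (fact s * fact (n - 1 - s)) * ?C s (r - 1))"
  proof (intro arg_cong2[where f = "(+)"] sum.cong refl)
    fix s assume "s \<in> {..<n}"
    hence s: "s < n" by simp
    have coeff_upper: "real (Suc s) / (fact (Suc s) * fact (n - Suc s)) = 1 / (fact s * fact (n - 1 - s))"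
      by simp
    have "?vert (Suc s) / (fact (Suc s) * fact (n - Suc s))
        = real (Suc s) / (fact (Suc s) * fact (n - Suc s)) * ((-1) ^ s * (?C s r - ?C s (r - 1)))"
      unfolding Lagr_level_calL_vertical_Suc[OF r] by simp
    thus "?vert (Suc s) / (fact (Suc s) * fact (n - Suc s))
        = (-1) ^ s / (fact s * fact (n - 1 - s)) * (?C s r - ?C s (r - 1))"
      unfolding coeff_upper by simp
    have "fact (n - s) = real (n - s) * fact (n - 1 - s)"
      using s fact_reduce[where 'a = real, of "n - s"] by (simp add: diff_diff_left)
    hence coeff_lower: "real (n - s) / (fact s * fact (n - s)) = 1 / (fact s * fact (n - 1 - s))"
      using s by simp
    have "?hor s / (fact s * fact (n - s)) = real (n - s) / (fact s * fact (n - s)) * ((-1) ^ s * ?C s (r - 1))"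
      unfolding Lagr_level_calL_horizontal[OF s] by simp
    thus "?hor s / (fact s * fact (n - s)) = (-1) ^ s / (fact s * fact (n - 1 - s)) * ?C s (r - 1)"
      unfolding coeff_lower by simp
  qed
  finally show ?thesis
    by (simp only: sum.distrib[symmetric] distrib_left[symmetric] diff_add_cancel)
qed

section \<open>The potential\<close>

definition potential_term :: "nat \<Rightarrow> nat \<Rightarrow> nat \<Rightarrow> afam \<Rightarrow> nat \<Rightarrow> nat \<Rightarrow> jpoint \<Rightarrow> real" where
  "potential_term n m r A s j x = (\<Sum>Is\<in>tuples s (tuples (r - 1) {..<n}). \<Sum>\<sigma>s\<in>tuples s {..<m}.
     \<Sum>zs\<in>tuples (n - 1 - s) {..<n}. A Is \<sigma>s zs x * hyperjac n Is \<sigma>s (j # zs) x)"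

definition potential :: "nat \<Rightarrow> nat \<Rightarrow> nat \<Rightarrow> afam \<Rightarrow> nat \<Rightarrow> jpoint \<Rightarrow> real" where
  "potential n m r A j x = (\<Sum>s<n. (-1) ^ s / (fact s * fact (n - 1 - s)) * potential_term n m r A s j x)"

context
  fixes n m r :: nat and V :: "jpoint set" and A :: afam
  assumes r: "r \<ge> 1" and V: "open V"
    and smooth: "\<And>s Is \<sigma>s zs. s < n \<Longrightarrow> Is \<in> tuples s (tuples (r - 1) {..<n}) \<Longrightarrow>
        \<sigma>s \<in> tuples s {..<m} \<Longrightarrow> zs \<in> tuples (n - 1 - s) {..<n} \<Longrightarrow>
        jet_smooth n m (r - 1) V (A Is \<sigma>s zs)"
begin

lemma depends_upto_order_family:
  assumes "s < n" "Is \<in> tuples s (tuples (r - 1) {..<n})" "\<sigma>s \<in> tuples s {..<m}" "zs \<in> tuples (n - 1 - s) {..<n}"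
  shows "depends_upto_order n m (r - 1) (A Is \<sigma>s zs)"
  using smooth[OF assms] by (simp add: jet_smooth_iff)

lemma smooth_upto_on_family:
  assumes "s < n" "Is \<in> tuples s (tuples (r - 1) {..<n})" "\<sigma>s \<in> tuples s {..<m}" "zs \<in> tuples (n - 1 - s) {..<n}"
  shows "smooth_upto_on k V (A Is \<sigma>s zs)"
  using smooth[OF assms] by (simp add: jet_smooth_iff smooth_on_iff_smooth_upto_on)

lemma smooth_upto_on_potential_term: "s < n \<Longrightarrow> smooth_upto_on k V (potential_term n m r A s j)"
  unfolding potential_term_def[abs_def]
  by (intro smooth_upto_on_sum smooth_upto_on_mult smooth_upto_on_hyperjac smooth_upto_on_family V
      finite_tuples finite_lessThan) simp_all

lemma depends_upto_order_potential_term: "s < n \<Longrightarrow> depends_upto_order n m r (potential_term n m r A s j)"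
  unfolding potential_term_def[abs_def]
proof (intro depends_upto_order_sum depends_upto_order_mult)
  fix Is \<sigma>s zs
  assume "s < n" "Is \<in> tuples s (tuples (r - 1) {..<n})" "\<sigma>s \<in> tuples s {..<m}" "zs \<in> tuples (n - 1 - s) {..<n}"
  thus "depends_upto_order n m r (A Is \<sigma>s zs)"
    by (intro depends_upto_order_mono[of "r - 1" r] depends_upto_order_family) auto
  show "depends_upto_order n m r (hyperjac n Is \<sigma>s (j # zs))"
    using hyperjac_depends_upto_order[of Is "r - 1" n \<sigma>s m] r \<open>Is \<in> _\<close> \<open>\<sigma>s \<in> _\<close>
    by (simp add: mem_tuples)
qed

lemma jet_smooth_potential: "jet_smooth n m r V (potential n m r A j)"
  unfolding jet_smooth_iff smooth_on_iff_smooth_upto_on potential_def[abs_def]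
  by (intro conjI allI depends_upto_order_sum depends_upto_order_mult depends_upto_order_const
      depends_upto_order_potential_term smooth_upto_on_sum smooth_upto_on_mult smooth_upto_on_const
      smooth_upto_on_potential_term V finite_lessThan) simp_all

lemma sum_fder_potential_term:
  assumes p: "p \<in> V" and s: "s < n"
  shows "(\<Sum>j<n. fder n m (Suc r) j (potential_term n m r A s j) p) = contracted_fder n m r A s r p"
proof -
  let ?TI = "tuples (r - 1) {..<n}"
  have pdiff_A: "partially_differentiable_at (A Is \<sigma>s zs) p"
    if "Is \<in> tuples s ?TI" "\<sigma>s \<in> tuples s {..<m}" "zs \<in> tuples (n - 1 - s) {..<n}" for Is \<sigma>s zs
    using smooth_upto_on_family[OF s that, of 0] p by (rule smooth_upto_on_imp_partially_differentiable_at)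
  have pdiff_J: "partially_differentiable_at (hyperjac n Is \<sigma>s zs) p" for Is \<sigma>s zs
    using smooth_upto_on_hyperjac[OF V, of 0] p by (rule smooth_upto_on_imp_partially_differentiable_at)
  have fder_term: "fder n m (Suc r) j (\<lambda>x. A Is \<sigma>s zs x * hyperjac n Is \<sigma>s (j # zs) x) p =
      fder n m r j (A Is \<sigma>s zs) p * hyperjac n Is \<sigma>s (j # zs) p
      + A Is \<sigma>s zs p * fder n m (Suc r) j (hyperjac n Is \<sigma>s (j # zs)) p"
    if "Is \<in> tuples s ?TI" "\<sigma>s \<in> tuples s {..<m}" "zs \<in> tuples (n - 1 - s) {..<n}" for Is \<sigma>s zs j
    using r depends_upto_order_family[OF s that]
    by (simp add: fder_mult pdiff_A[OF that] pdiff_J fder_Suc_eq_if_depends)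
  have "fder n m (Suc r) j (potential_term n m r A s j) p =
      (\<Sum>Is\<in>tuples s ?TI. \<Sum>\<sigma>s\<in>tuples s {..<m}. \<Sum>zs\<in>tuples (n - 1 - s) {..<n}.
        fder n m (Suc r) j (\<lambda>x. A Is \<sigma>s zs x * hyperjac n Is \<sigma>s (j # zs) x) p)" for j
    unfolding potential_term_def[abs_def]
    by (simp add: fder_sum partially_differentiable_at_sum partially_differentiable_at_mult pdiff_A pdiff_J)
  hence "(\<Sum>j<n. fder n m (Suc r) j (potential_term n m r A s j) p) =
      (\<Sum>Is\<in>tuples s ?TI. \<Sum>\<sigma>s\<in>tuples s {..<m}. \<Sum>zs\<in>tuples (n - 1 - s) {..<n}.
        (\<Sum>j<n. fder n m r j (A Is \<sigma>s zs) p * hyperjac n Is \<sigma>s (j # zs) p)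
        + A Is \<sigma>s zs p * (\<Sum>j<n. fder n m (Suc r) j (hyperjac n Is \<sigma>s (j # zs)) p))"
    by (simp add: fder_term sum.distrib sum_distrib_left sum.swap[of _ "{..<n}"] cong: sum.cong)
  also have "\<dots> = contracted_fder n m r A s r p"
    unfolding contracted_fder_def
  proof (intro sum.cong refl)
    fix Is \<sigma>s zs assume "Is \<in> tuples s ?TI" "\<sigma>s \<in> tuples s {..<m}"
    hence "(\<Sum>j<n. fder n m (Suc r) j (hyperjac n Is \<sigma>s (j # zs)) p) = 0"
      using r by (intro hyperjac_divergence_free[where k = "r - 1"]) (auto simp: mem_tuples)
    thus "(\<Sum>j<n. fder n m r j (A Is \<sigma>s zs) p * hyperjac n Is \<sigma>s (j # zs) p)
        + A Is \<sigma>s zs p * (\<Sum>j<n. fder n m (Suc r) j (hyperjac n Is \<sigma>s (j # zs)) p)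
      = (\<Sum>j<n. fder n m r j (A Is \<sigma>s zs) p * hyperjac n Is \<sigma>s (j # zs) p)"
      by simp
  qed
  finally show ?thesis .
qed

lemma Lagr_eq_divergence_potential:
  assumes p: "p \<in> V"
  shows "Lagr n m r A p = (\<Sum>j<n. fder n m (r + 1) j (potential n m r A j) p)"
proof -
  let ?e = "\<lambda>s. (-1) ^ s / (fact s * fact (n - 1 - s)) :: real"
  have pdiff: "partially_differentiable_at (potential_term n m r A s j) p" if "s < n" for s j
    using smooth_upto_on_potential_term[OF that, of 0] p by (rule smooth_upto_on_imp_partially_differentiable_at)
  have "fder n m (Suc r) j (potential n m r A j) p = (\<Sum>s<n. ?e s * fder n m (Suc r) j (potential_term n m r A s j) p)"
    for j
  proof -
    have "potential n m r A j = (\<lambda>x. \<Sum>s<n. ?e s * potential_term n m r A s j x)"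
      by (simp add: fun_eq_iff potential_def)
    hence "fder n m (Suc r) j (potential n m r A j) p = (\<Sum>s<n. fder n m (Suc r) j (\<lambda>x. ?e s * potential_term n m r A s j x) p)"
      by (simp only:)
         (rule fder_sum; (intro partially_differentiable_at_mult partially_differentiable_at_const pdiff)?; simp)
    also have "\<dots> = (\<Sum>s<n. ?e s * fder n m (Suc r) j (potential_term n m r A s j) p)"
      by (intro sum.cong refl fder_const_mult pdiff) simp
    finally show ?thesis .
  qed
  hence "(\<Sum>j<n. fder n m (r + 1) j (potential n m r A j) p) =
      (\<Sum>j<n. \<Sum>s<n. ?e s * fder n m (Suc r) j (potential_term n m r A s j) p)"
    by simp
  also have "\<dots> = (\<Sum>s<n. ?e s * contracted_fder n m r A s r p)"
    by (subst sum.swap, intro sum.cong refl)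
       (simp only: sum_distrib_left[symmetric], simp add: sum_fder_potential_term[OF p])
  also have "\<dots> = Lagr n m r A p"
    by (rule Lagr_eq_sum_contracted_fder[OF r, symmetric])
  finally show ?thesis ..
qed

end

theorem mainTheorem5:
  fixes n m r :: nat and V :: "jpoint set" and A :: afam
  assumes r: "r \<ge> 1"
    and V: "chart_domain n m V"
    and smooth: "\<And>s Is \<sigma>s is. s < n \<Longrightarrow> Is \<in> tuples s (tuples (r - 1) {..<n}) \<Longrightarrow>
        \<sigma>s \<in> tuples s {..<m} \<Longrightarrow> is \<in> tuples (n - 1 - s) {..<n} \<Longrightarrow>
        jet_smooth n m (r - 1) V (A Is \<sigma>s is)"
    and symm: "\<And>s Is \<sigma>s is P Q p. s < n \<Longrightarrow> Is \<in> tuples s (tuples (r - 1) {..<n}) \<Longrightarrow>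
        \<sigma>s \<in> tuples s {..<m} \<Longrightarrow> is \<in> tuples (n - 1 - s) {..<n} \<Longrightarrow>
        P permutes {..<s} \<Longrightarrow> Q permutes {..<n - 1 - s} \<Longrightarrow> p \<in> V \<Longrightarrow>
        A (permute_list P Is) (permute_list P \<sigma>s) (permute_list Q is) p
          = real_of_int (sign P * sign Q) * A Is \<sigma>s is p"
  shows "\<exists>W :: nat \<Rightarrow> jpoint \<Rightarrow> real.
           (\<forall>j<n. jet_smooth n m r V (W j)) \<and>
           (\<forall>p \<in> V. Lagr n m r A p = (\<Sum>j<n. fder n m (r + 1) j (W j) p))"
proof -
  have "open V" using V by (simp add: chart_domain_def)
  show ?thesis
  proof (intro exI conjI allI impI ballI)
    show "jet_smooth n m r V (potential n m r A j)" for j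
      by (rule jet_smooth_potential[OF r \<open>open V\<close>]) (fact smooth)
    show "Lagr n m r A p = (\<Sum>j<n. fder n m (r + 1) j (potential n m r A j) p)" if "p \<in> V" for p
      by (rule Lagr_eq_divergence_potential[OF r \<open>open V\<close> _ that]) (fact smooth)
  qed
qed

end
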